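(* Let $V$ be an infinite-dimensional vector space over a field $\mathbb{F}$ and let $u$ be an endomorphism of $V$ with no dominant eigenvalue. Then, for every scalar $a\in\mathbb{F}$, the endomorphism $u$ is $a$-elementarily decomposable, i.e. there exists an endomorphism $v$ of $V$ such that $v^2=av$ and $u-v$ is elementary.
   Context: A scalar $\lambda$ is a dominant eigenvalue of $u\in\mathrm{End}(V)$ if $\operatorname{rk}(u-\lambda\,\mathrm{id}_V)<\dim V$. For $u\in\mathrm{End}(V)$, $V^u$ denotes the $\mathbb{F}[t]$-module with underlying space $V$ and $t\cdot x:=u(x)$. The endomorphism $u$ is called elementary if $V^u$ is a free $\mathbb{F}[t]$-module. *)

theory Defs
  imports Main "HOL-Library.Equipollence" "HOL-Computational_Algebra.Polynomial"
begin

text \<open>Throughout, V is the whole type 'v, a vector space over the field 'a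
  with scalar multiplication scale.\<close>

text \<open>The rank of f is strictly less than the dimension of V (comparison of
  cardinals): a basis of the range of f is strictly smaller in cardinality than
  a basis of V (by invariance of dimension this does not depend on the bases).\<close>
definition rank_lt_dim :: "('a::field \<Rightarrow> 'v::ab_group_add \<Rightarrow> 'v) \<Rightarrow> ('v \<Rightarrow> 'v) \<Rightarrow> bool" where
  "rank_lt_dim scale f \<longleftrightarrow>
     (\<exists>B C. \<not> module.dependent scale B \<and> module.span scale B = UNIV \<and>
            \<not> module.dependent scale C \<and> module.span scale C = range f \<and> C \<prec> B)"

definition dominant_eigenvalue :: "('a::field \<Rightarrow> 'v::ab_group_add \<Rightarrow> 'v) \<Rightarrow> ('v \<Rightarrow> 'v) \<Rightarrow> 'a \<Rightarrow> bool" where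
  "dominant_eigenvalue scale u c \<longleftrightarrow> rank_lt_dim scale (\<lambda>x. u x - scale c x)"

definition poly_act :: "('a::field \<Rightarrow> 'v::ab_group_add \<Rightarrow> 'v) \<Rightarrow> ('v \<Rightarrow> 'v) \<Rightarrow> 'a poly \<Rightarrow> 'v \<Rightarrow> 'v" where
  "poly_act scale u p x = (\<Sum>i\<le>degree p. scale (coeff p i) ((u ^^ i) x))"

text \<open>u is elementary: V^u is a free F[t]-module, i.e. it has a basis B: every
  vector is uniquely a finite F[t]-linear combination of elements of B.\<close>
definition elementary :: "('a::field \<Rightarrow> 'v::ab_group_add \<Rightarrow> 'v) \<Rightarrow> ('v \<Rightarrow> 'v) \<Rightarrow> bool" where
  "elementary scale u \<longleftrightarrow>
     (\<exists>B. \<forall>x. \<exists>!c :: 'v \<Rightarrow> 'a poly.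
        finite {b. c b \<noteq> 0} \<and> {b. c b \<noteq> 0} \<subseteq> B \<and>
        x = (\<Sum>b\<in>{b. c b \<noteq> 0}. poly_act scale u (c b) b))"

definition infinite_dimensional :: "('a::field \<Rightarrow> 'v::ab_group_add \<Rightarrow> 'v) \<Rightarrow> bool" where
  "infinite_dimensional scale \<longleftrightarrow> \<not> (\<exists>S. finite S \<and> module.span scale S = UNIV)"

end

theory Submission
  imports Defs
begin

text \<open>Choose a basis \<open>E\<close> of \<open>V\<close> and work through the slots \<open>E \<times> \<nat>\<close> along a well-order
  in which every slot has fewer than \<open>dim V\<close> predecessors and \<open>(c, n)\<close> precedes \<open>(c, n + 1)\<close>.
  Slot by slot a new basis is produced: with \<open>T\<close> the span of everything produced before,
  slot \<open>(c, 0)\<close> contributes \<open>c\<close> unless \<open>c \<in> T\<close>, and slot \<open>(c, n + 1)\<close>, with \<open>g\<close> the last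
  vector of the chain so far, contributes \<open>u g - a g\<close> if this lies outside \<open>T\<close>, and otherwise
  a pair \<open>x, u x\<close> with \<open>x \<notin> T\<close> and \<open>u x \<notin> T + \<bbbF> x\<close>. Such an \<open>x\<close> exists because \<open>u\<close> has no
  dominant eigenvalue: otherwise \<open>u\<close> would induce a homothety on \<open>V / T\<close>.

  Let \<open>v\<close> vanish on the inserted vectors \<open>x\<close> and map every other basis vector \<open>g\<close> to \<open>a g\<close>
  minus the inserted vector following \<open>g\<close>, if any; then \<open>v\<^sup>2 = a v\<close>. Now \<open>w = u - v\<close> maps each
  basis vector to its successor in its chain modulo earlier basis vectors, and the successor map
  is a bijection onto the basis vectors not produced at the slots \<open>(c, 0)\<close>. Such a triangular
  shift makes \<open>V\<^sup>w\<close> free on the vectors produced at the slots \<open>(c, 0)\<close>.\<close>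

section \<open>Polynomial combinations\<close>

lemma vector_space_smult: "vector_space (smult :: 'a::field \<Rightarrow> 'a poly \<Rightarrow> 'a poly)"
  by unfold_locales (auto simp: smult_add_right smult_add_left)

lemma linear_pCons_0: "Vector_Spaces.linear (smult :: 'a::field \<Rightarrow> 'a poly \<Rightarrow> 'a poly) smult (pCons 0)"
  unfolding Vector_Spaces.linear_iff using vector_space_smult by auto

text \<open>A copy of \<open>vector_space\<close>: constants defined in \<open>vector_space\<close> itself would also be
  inherited by its global interpretation \<open>real_vector\<close>, whose abbreviations then capture
  the names below.\<close>

locale vspace = vector_space scale
  for scale :: "'a::field \<Rightarrow> 'b::ab_group_add \<Rightarrow> 'b" (infixr \<open>*s\<close> 75)
begin

lemma poly_act_eq_sum_atMost:
  assumes "degree p \<le> N"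
  shows "poly_act scale f p x = (\<Sum>i\<le>N. coeff p i *s (f ^^ i) x)"
proof -
  have "(\<Sum>i\<le>N. coeff p i *s (f ^^ i) x) = (\<Sum>i\<le>degree p. coeff p i *s (f ^^ i) x)"
    by (rule sum.mono_neutral_right) (use assms in \<open>auto simp: coeff_eq_0\<close>)
  then show ?thesis by (simp add: poly_act_def)
qed

lemma poly_act_add: "poly_act scale f (p + q) x = poly_act scale f p x + poly_act scale f q x"
proof -
  let ?N = "max (degree p) (degree q)"
  have "degree (p + q) \<le> ?N" by (rule degree_add_le) auto
  then show ?thesis
    by (simp add: poly_act_eq_sum_atMost[of _ ?N] scale_left_distrib sum.distrib)
qed

lemma poly_act_smult: "poly_act scale f (smult k p) x = k *s poly_act scale f p x"
  by (simp add: poly_act_eq_sum_atMost[of _ "degree p"] scale_sum_right)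

lemma poly_act_0 [simp]: "poly_act scale f 0 x = 0"
  by (simp add: poly_act_def)

lemma poly_act_1 [simp]: "poly_act scale f 1 x = x"
  by (simp add: poly_act_def)

lemma poly_act_pCons_0:
  assumes "Vector_Spaces.linear scale scale f"
  shows "poly_act scale f (pCons 0 p) x = f (poly_act scale f p x)"
proof -
  interpret f: Vector_Spaces.linear scale scale f by fact
  have "poly_act scale f (pCons 0 p) x = (\<Sum>i\<le>Suc (degree p). coeff (pCons 0 p) i *s (f ^^ i) x)"
    by (rule poly_act_eq_sum_atMost) (simp add: degree_pCons_le)
  also have "\<dots> = (\<Sum>i\<le>degree p. coeff (pCons 0 p) (Suc i) *s (f ^^ Suc i) x)"
    by (subst sum.atMost_Suc_shift) simp
  also have "\<dots> = f (poly_act scale f p x)"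
    by (simp add: poly_act_def f.sum f.scale)
  finally show ?thesis .
qed

definition poly_comb :: "('b \<Rightarrow> 'b) \<Rightarrow> ('b \<Rightarrow> 'a poly) \<Rightarrow> 'b"
  where "poly_comb f c = (\<Sum>b\<in>{b. c b \<noteq> 0}. poly_act scale f (c b) b)"

definition poly_span :: "('b \<Rightarrow> 'b) \<Rightarrow> 'b set \<Rightarrow> 'b set"
  where "poly_span f B = {poly_comb f c | c. finite {b. c b \<noteq> 0} \<and> {b. c b \<noteq> 0} \<subseteq> B}"

lemma poly_comb_eq_sum:
  "finite F \<Longrightarrow> {b. c b \<noteq> 0} \<subseteq> F \<Longrightarrow> poly_comb f c = (\<Sum>b\<in>F. poly_act scale f (c b) b)"
  unfolding poly_comb_def by (rule sum.mono_neutral_left) auto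

lemma subspace_poly_span: "subspace (poly_span f B)"
proof (rule subspaceI)
  show "0 \<in> poly_span f B"
    unfolding poly_span_def by (auto intro!: exI[of _ "\<lambda>_. 0"] simp: poly_comb_def)
next
  fix x y assume "x \<in> poly_span f B" "y \<in> poly_span f B"
  then obtain c c' where c: "finite {b. c b \<noteq> 0}" "{b. c b \<noteq> 0} \<subseteq> B" "x = poly_comb f c"
    and c': "finite {b. c' b \<noteq> 0}" "{b. c' b \<noteq> 0} \<subseteq> B" "y = poly_comb f c'"
    unfolding poly_span_def by auto
  let ?F = "{b. c b \<noteq> 0} \<union> {b. c' b \<noteq> 0}"
  have F: "finite ?F" "{b. c b + c' b \<noteq> 0} \<subseteq> ?F" using c c' by auto
  have "poly_comb f (\<lambda>b. c b + c' b) = x + y"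
    using c c' by (simp add: poly_comb_eq_sum[OF F] poly_comb_eq_sum[OF F(1)] poly_act_add sum.distrib)
  then show "x + y \<in> poly_span f B"
    unfolding poly_span_def using c c' F by (auto intro!: exI[of _ "\<lambda>b. c b + c' b"] dest: finite_subset)
next
  fix k x assume "x \<in> poly_span f B"
  then obtain c where c: "finite {b. c b \<noteq> 0}" "{b. c b \<noteq> 0} \<subseteq> B" "x = poly_comb f c"
    unfolding poly_span_def by auto
  have F: "{b. smult k (c b) \<noteq> 0} \<subseteq> {b. c b \<noteq> 0}" by auto
  have "poly_comb f (\<lambda>b. smult k (c b)) = k *s x"
    using c by (simp add: poly_comb_eq_sum[OF c(1) F] poly_act_smult poly_comb_def scale_sum_right)
  then show "k *s x \<in> poly_span f B"
    unfolding poly_span_def using c F by (auto intro!: exI[of _ "\<lambda>b. smult k (c b)"] dest: finite_subset)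
qed

lemma poly_span_closed:
  assumes f: "Vector_Spaces.linear scale scale f" and x: "x \<in> poly_span f B"
  shows "f x \<in> poly_span f B"
proof -
  interpret f: Vector_Spaces.linear scale scale f by fact
  obtain c where c: "finite {b. c b \<noteq> 0}" "{b. c b \<noteq> 0} \<subseteq> B" "x = poly_comb f c"
    using x unfolding poly_span_def by auto
  have supp: "{b. pCons 0 (c b) \<noteq> 0} = {b. c b \<noteq> 0}" by auto
  have "poly_comb f (\<lambda>b. pCons 0 (c b)) = f x"
    unfolding poly_comb_def supp c(3) by (simp add: poly_comb_def poly_act_pCons_0[OF f] f.sum)
  then show ?thesis
    unfolding poly_span_def using c supp by (auto intro!: exI[of _ "\<lambda>b. pCons 0 (c b)"])
qed

lemma generator_in_poly_span: "b \<in> B \<Longrightarrow> b \<in> poly_span f B"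
  unfolding poly_span_def
  by (auto intro!: exI[of _ "\<lambda>b'. if b' = b then 1 else 0"] simp: poly_comb_def split: if_splits)

lemma elementaryI:
  assumes "\<And>x. x \<in> poly_span f B"
    and "\<And>c c'. finite {b. c b \<noteq> 0} \<Longrightarrow> {b. c b \<noteq> 0} \<subseteq> B \<Longrightarrow>
           finite {b. c' b \<noteq> 0} \<Longrightarrow> {b. c' b \<noteq> 0} \<subseteq> B \<Longrightarrow> poly_comb f c = poly_comb f c' \<Longrightarrow> c = c'"
  shows "elementary scale f"
  unfolding elementary_def
proof (intro exI[of _ B] allI)
  fix x
  obtain c where c: "finite {b. c b \<noteq> 0}" "{b. c b \<noteq> 0} \<subseteq> B" "x = poly_comb f c"
    using assms(1)[of x] unfolding poly_span_def by auto
  show "\<exists>!c. finite {b. c b \<noteq> 0} \<and> {b. c b \<noteq> 0} \<subseteq> B \<and>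
      x = (\<Sum>b\<in>{b. c b \<noteq> 0}. poly_act scale f (c b) b)"
  proof (rule ex1I[of _ c])
    fix c' assume "finite {b. c' b \<noteq> 0} \<and> {b. c' b \<noteq> 0} \<subseteq> B \<and>
      x = (\<Sum>b\<in>{b. c' b \<noteq> 0}. poly_act scale f (c' b) b)"
    then show "c' = c" using c assms(2)[of c' c] unfolding poly_comb_def by auto
  qed (use c in \<open>auto simp: poly_comb_def\<close>)
qed

end

section \<open>A freeness criterion\<close>

locale shift_basis = vspace scale
  for scale :: "'a::field \<Rightarrow> 'b::ab_group_add \<Rightarrow> 'b" (infixr \<open>*s\<close> 75) +
  fixes f :: "'b \<Rightarrow> 'b" and D B :: "'b set" and R :: "('b \<times> 'b) set" and succ :: "'b \<Rightarrow> 'b"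
  assumes linear_f: "Vector_Spaces.linear scale scale f"
    and independent_D: "independent D" and span_D: "span D = UNIV"
    and wf_R: "wf R" and B_subset: "B \<subseteq> D"
    and bij_succ: "bij_betw succ D (D - B)"
    and succ_less: "d \<in> D \<Longrightarrow> (d, succ d) \<in> R"
    and f_minus_succ: "d \<in> D \<Longrightarrow> f d - succ d \<in> span {d' \<in> D. (d', succ d) \<in> R}"
begin

definition pred :: "'b \<Rightarrow> 'b" where "pred = inv_into D succ"

lemma pred_in: "h \<in> D - B \<Longrightarrow> pred h \<in> D"
  and succ_pred: "h \<in> D - B \<Longrightarrow> succ (pred h) = h"
  using bij_succ unfolding pred_def bij_betw_def by (auto intro: inv_into_into f_inv_into_f)

lemma pred_succ: "d \<in> D \<Longrightarrow> pred (succ d) = d"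
  using bij_succ unfolding pred_def bij_betw_def by (simp add: inv_into_f_f)

lemma pred_less: "h \<in> D - B \<Longrightarrow> (pred h, h) \<in> R"
  using succ_less[OF pred_in] succ_pred by metis

definition correction :: "'b \<Rightarrow> 'b" where "correction h = f (pred h) - h"

lemma correction_in_span: "h \<in> D - B \<Longrightarrow> correction h \<in> span {d \<in> D. (d, h) \<in> R}"
  using f_minus_succ[OF pred_in] succ_pred unfolding correction_def by metis

lemma representation_correction_less:
  assumes h: "h \<in> D - B" and d: "representation D (correction h) d \<noteq> 0"
  shows "(d, h) \<in> R"
proof -
  have "representation D (correction h) = representation {d \<in> D. (d, h) \<in> R} (correction h)"
    by (rule representation_extend[OF independent_D correction_in_span[OF h]]) auto
  with d show ?thesis by (auto dest: representation_ne_zero)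
qed

lemma basis_in_poly_span: "h \<in> D \<Longrightarrow> h \<in> poly_span f B"
proof (induction h rule: wf_induct_rule[OF wf_R])
  case (1 h)
  show ?case
  proof (cases "h \<in> B")
    case True then show ?thesis by (rule generator_in_poly_span)
  next
    case False
    then have h: "h \<in> D - B" using 1 by auto
    have "f (pred h) \<in> poly_span f B"
      using 1 pred_less[OF h] pred_in[OF h] by (auto intro: poly_span_closed[OF linear_f])
    moreover have "span {d \<in> D. (d, h) \<in> R} \<subseteq> poly_span f B"
      using 1 by (intro span_minimal subspace_poly_span) auto
    then have "correction h \<in> poly_span f B" using correction_in_span[OF h] by auto
    ultimately show ?thesis
      using subspace_diff[OF subspace_poly_span] unfolding correction_def by fastforce
  qed
qed

lemma in_poly_span: "x \<in> poly_span f B"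
  using span_minimal[OF _ subspace_poly_span, of D f B] basis_in_poly_span span_D by auto

text \<open>The polynomial coordinates of the basis vectors, computed by well-founded recursion along
  \<open>h = f (pred h) - correction h\<close>.\<close>

definition coord_step :: "('b \<Rightarrow> 'b \<Rightarrow> 'a poly) \<Rightarrow> 'b \<Rightarrow> 'b \<Rightarrow> 'a poly" where
  "coord_step g h = (if h \<in> B then (\<lambda>b. if b = h then 1 else 0) else
     (\<lambda>b. pCons 0 (g (pred h) b) - (\<Sum>d | representation D (correction h) d \<noteq> 0.
        smult (representation D (correction h) d) (g d b))))"

definition basis_coord :: "'b \<Rightarrow> 'b \<Rightarrow> 'a poly" where "basis_coord = wfrec R coord_step"

lemma basis_coord_eq: "h \<in> D \<Longrightarrow> basis_coord h = coord_step basis_coord h"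
proof -
  assume hD: "h \<in> D"
  have "basis_coord h = coord_step (cut basis_coord R h) h"
    unfolding basis_coord_def by (rule wfrec[OF wf_R])
  also have "\<dots> = coord_step basis_coord h"
  proof (cases "h \<in> B")
    case False
    then have h: "h \<in> D - B" using hD by auto
    show ?thesis unfolding coord_step_def using False
      by (auto simp: cut_apply[OF pred_less[OF h]] cut_apply[OF representation_correction_less[OF h]]
          intro!: ext sum.cong)
  qed (simp add: coord_step_def)
  finally show ?thesis .
qed

sublocale poly_pair: vector_space_pair scale "smult :: 'a \<Rightarrow> 'a poly \<Rightarrow> 'a poly"
  using vector_space_smult vector_space_axioms by (simp add: vector_space_pair_def)

definition coord :: "'b \<Rightarrow> 'b \<Rightarrow> 'a poly" where
  "coord b = poly_pair.construct D (\<lambda>d. basis_coord d b)"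

lemma linear_coord: "Vector_Spaces.linear scale smult (coord b)"
  unfolding coord_def by (rule poly_pair.linear_construct[OF independent_D])

lemma coord_basis: "d \<in> D \<Longrightarrow> coord b d = basis_coord d b"
  unfolding coord_def by (rule poly_pair.construct_basis[OF independent_D])

lemma coord_eq_sum_representation:
  "coord b x = (\<Sum>d | representation D x d \<noteq> 0. smult (representation D x d) (basis_coord d b))"
proof -
  interpret c: Vector_Spaces.linear scale smult "coord b" by (rule linear_coord)
  have "x = (\<Sum>d | representation D x d \<noteq> 0. representation D x d *s d)"
    using sum_nonzero_representation_eq[OF independent_D] span_D by auto
  then have "coord b x = (\<Sum>d | representation D x d \<noteq> 0. smult (representation D x d) (coord b d))"
    by (metis (no_types, lifting) c.scale c.sum sum.cong)
  also have "\<dots> = (\<Sum>d | representation D x d \<noteq> 0. smult (representation D x d) (basis_coord d b))"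
    by (auto intro!: sum.cong simp: coord_basis dest: representation_ne_zero)
  finally show ?thesis .
qed

lemma coord_f_basis:
  assumes d: "d \<in> D"
  shows "coord b (f d) = pCons 0 (coord b d)"
proof -
  interpret c: Vector_Spaces.linear scale smult "coord b" by (rule linear_coord)
  have h: "succ d \<in> D - B" using bij_succ d by (auto simp: bij_betw_def)
  have "f d = succ d + correction (succ d)" unfolding correction_def pred_succ[OF d] by simp
  then have "coord b (f d) = basis_coord (succ d) b + coord b (correction (succ d))"
    using h by (simp add: c.add coord_basis)
  also have "basis_coord (succ d) b = pCons 0 (basis_coord d b) - coord b (correction (succ d))"
    using basis_coord_eq[of "succ d"] h pred_succ[OF d]
    by (simp add: coord_step_def coord_eq_sum_representation)
  finally show ?thesis using coord_basis[OF d] by simp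
qed

lemma coord_f: "coord b (f x) = pCons 0 (coord b x)"
proof -
  have "Vector_Spaces.linear scale smult (coord b \<circ> f)"
    by (rule Vector_Spaces.linear_compose[OF linear_f linear_coord])
  moreover have "Vector_Spaces.linear scale smult (pCons 0 \<circ> coord b)"
    by (rule Vector_Spaces.linear_compose[OF linear_coord linear_pCons_0])
  ultimately have "(coord b \<circ> f) x = (pCons 0 \<circ> coord b) x"
    by (rule poly_pair.linear_eq_on[where B = D]) (auto simp: span_D coord_f_basis)
  then show ?thesis by simp
qed

lemma coord_poly_act: "coord b (poly_act scale f p x) = p * coord b x"
proof -
  interpret c: Vector_Spaces.linear scale smult "coord b" by (rule linear_coord)
  have pow: "coord b ((f ^^ i) x) = monom 1 i * coord b x" for i
    by (induction i) (auto simp: coord_f monom_Suc monom_0 one_pCons[symmetric])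
  have "coord b (poly_act scale f p x) = (\<Sum>i\<le>degree p. smult (coeff p i) (monom 1 i * coord b x))"
    by (simp add: poly_act_def c.sum c.scale pow)
  also have "\<dots> = (\<Sum>i\<le>degree p. monom (coeff p i) i) * coord b x"
    by (simp add: sum_distrib_right smult_monom_mult)
  finally show ?thesis by (simp add: poly_as_sum_of_monoms)
qed

lemma coord_generator: "b' \<in> B \<Longrightarrow> coord b b' = (if b = b' then 1 else 0)"
  using B_subset basis_coord_eq[of b'] by (auto simp: coord_basis coord_step_def)

lemma coord_poly_comb:
  assumes "finite {b. c b \<noteq> 0}" "{b. c b \<noteq> 0} \<subseteq> B"
  shows "coord b (poly_comb f c) = c b"
proof -
  interpret c: Vector_Spaces.linear scale smult "coord b" by (rule linear_coord)
  have "coord b (poly_comb f c) = (\<Sum>b'\<in>{b. c b \<noteq> 0}. c b' * coord b b')"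
    by (simp add: poly_comb_def c.sum coord_poly_act)
  also have "\<dots> = (\<Sum>b'\<in>{b. c b \<noteq> 0}. if b = b' then c b' else 0)"
    using assms(2) by (intro sum.cong) (auto simp: coord_generator)
  also have "\<dots> = c b" using assms(1) by (auto simp: sum.delta)
  finally show ?thesis .
qed

theorem elementary: "elementary scale f"
proof (rule elementaryI[OF in_poly_span])
  fix c c'
  assume "finite {b. c b \<noteq> 0}" "{b. c b \<noteq> 0} \<subseteq> B" "finite {b. c' b \<noteq> 0}" "{b. c' b \<noteq> 0} \<subseteq> B"
    and "poly_comb f c = poly_comb f c'"
  then show "c = c'" using coord_poly_comb by (metis ext)
qed

end

section \<open>Vectors escaping small subspaces\<close>

lemma lesspoll_insert_infinite: "infinite E \<Longrightarrow> A \<prec> E \<Longrightarrow> insert x A \<prec> E"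
  by (cases "finite A") (auto intro: finite_lesspoll_infinite eq_lesspoll_trans infinite_insert_eqpoll)

context vspace
begin

lemma independent_lepoll_spanning:
  assumes S: "independent S" "S \<subseteq> span A"
  shows "S \<lesssim> A"
proof -
  obtain A' where A': "A' \<subseteq> A" "independent A'" "A \<subseteq> span A'"
    using maximal_independent_subset[of A] by auto
  have "span A \<subseteq> span A'" by (rule span_minimal[OF A'(3) subspace_span])
  then have "S \<subseteq> span A'" using S(2) by blast
  then obtain S' where S': "S \<subseteq> S'" "S' \<subseteq> span A'" "independent S'" "span A' \<subseteq> span S'"
    using maximal_independent_subset_extend S(1) by metis
  have "span S' = span A'" using span_minimal[OF S'(2) subspace_span] S'(4) by (rule antisym)
  then obtain g where "bij_betw g S' A'" using bij_if_span_eq_span_bases S'(3) A'(2) by blast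
  then have "S' \<approx> A'" unfolding eqpoll_def by auto
  then show ?thesis
    by (meson A'(1) S'(1) eqpoll_imp_lepoll lepoll_trans subset_imp_lepoll)
qed

lemma in_span_insert_if_combination:
  assumes "a \<noteq> 0" "a *s y + b *s x \<in> span A"
  shows "y \<in> span (insert x A)"
proof -
  have "inverse a *s (a *s y + b *s x) \<in> span A" using assms(2) span_scale by blast
  then have "y - (- (b / a)) *s x \<in> span A"
    using assms(1) by (simp add: scale_right_distrib divide_inverse mult.commute)
  then show ?thesis using span_breakdown_eq by blast
qed

lemma eigenvalues_mod_span_eq:
  assumes u: "Vector_Spaces.linear scale scale u"
    and x: "x \<notin> span A" and y: "y \<notin> span (insert x A)"
    and hx: "u x - kx *s x \<in> span A" and hy: "u y - ky *s y \<in> span A"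
    and hxy: "u (x + y) - k *s (x + y) \<in> span A"
  shows "kx = k" and "ky = k"
proof -
  interpret u: Vector_Spaces.linear scale scale u by fact
  have "(u (x + y) - k *s (x + y)) - (u x - kx *s x) - (u y - ky *s y) \<in> span A"
    by (rule span_diff[OF span_diff[OF hxy hx] hy])
  moreover have "(u (x + y) - k *s (x + y)) - (u x - kx *s x) - (u y - ky *s y)
      = (ky - k) *s y + (kx - k) *s x"
    by (simp add: u.add scale_right_distrib scale_left_diff_distrib algebra_simps)
  ultimately have comb: "(ky - k) *s y + (kx - k) *s x \<in> span A" by simp
  show "ky = k"
    using in_span_insert_if_combination[OF _ comb] y by (cases "ky = k") auto
  then have "(kx - k) *s x \<in> span A" using comb by simp
  then show "kx = k"
    using x span_scale[of "(kx - k) *s x" A "inverse (kx - k)"] by (cases "kx = k") auto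
qed

end

locale no_dominant_eigenvalue = vspace scale
  for scale :: "'a::field \<Rightarrow> 'b::ab_group_add \<Rightarrow> 'b" (infixr \<open>*s\<close> 75) +
  fixes u :: "'b \<Rightarrow> 'b" and E :: "'b set"
  assumes linear_u: "Vector_Spaces.linear scale scale u"
    and independent_E: "independent E" and span_E: "span E = UNIV" and infinite_E: "infinite E"
    and range_not_lesspoll:
      "\<And>c C. independent C \<Longrightarrow> span C = range (\<lambda>x. u x - c *s x) \<Longrightarrow> \<not> C \<prec> E"
begin

lemma span_lesspoll_ne_UNIV: "A \<prec> E \<Longrightarrow> span A \<noteq> UNIV"
  using independent_lepoll_spanning[OF independent_E, of A]
  by (auto simp: lesspoll_def intro: lepoll_antisym)

lemma range_not_in_small_span:
  assumes "A \<prec> E"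
  shows "\<not> range (\<lambda>x. u x - k *s x) \<subseteq> span A"
proof
  assume range_A: "range (\<lambda>x. u x - k *s x) \<subseteq> span A"
  interpret g: Vector_Spaces.linear scale scale "\<lambda>x. u x - k *s x"
    by (rule vector_space_pair.linear_compose_sub[of scale scale])
      (simp_all add: vector_space_pair_def vector_space_axioms linear_u linear_scale_self)
  obtain C where C: "C \<subseteq> range (\<lambda>x. u x - k *s x)" "independent C"
      "range (\<lambda>x. u x - k *s x) \<subseteq> span C"
    by (rule maximal_independent_subset)
  have "span C = range (\<lambda>x. u x - k *s x)"
    by (rule span_subspace[OF C(1,3) g.subspace_image[OF subspace_UNIV]])
  moreover have "C \<prec> E"
    using independent_lepoll_spanning[OF C(2)] C(1) range_A assms
    by (meson lesspoll_trans1 order_trans)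
  ultimately show False using range_not_lesspoll[OF C(2)] by blast
qed

lemma homothety_mod_span_if_no_escape:
  assumes A: "A \<prec> E" and no_escape: "\<And>x. x \<notin> span A \<Longrightarrow> u x \<in> span (insert x A)"
  shows "\<exists>k. \<forall>x. u x - k *s x \<in> span A"
proof -
  interpret u: Vector_Spaces.linear scale scale u by (rule linear_u)
  have eigen: "\<exists>k. u x - k *s x \<in> span A" if "x \<notin> span A" for x
    using no_escape[OF that] span_breakdown_eq by blast
  have pair: "kx = ky" if x: "x \<notin> span A" and y: "y \<notin> span (insert x A)"
    and hx: "u x - kx *s x \<in> span A" and hy: "u y - ky *s y \<in> span A" for x y kx ky
  proof -
    have "x + y \<notin> span A"
      using in_span_insert_if_combination[of 1 y 1 x A] y by (auto simp: add.commute)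
    then obtain k where "u (x + y) - k *s (x + y) \<in> span A" using eigen by blast
    from eigenvalues_mod_span_eq[OF linear_u x y hx hy this] show ?thesis by simp
  qed
  obtain x0 where x0: "x0 \<notin> span A" using span_lesspoll_ne_UNIV[OF A] by blast
  obtain k0 where k0: "u x0 - k0 *s x0 \<in> span A" using eigen[OF x0] by blast
  have same: "k = k0" if x: "x \<notin> span A" and hx: "u x - k *s x \<in> span A" for x k
  proof -
    obtain z where z: "z \<notin> span (insert x (insert x0 A))"
      using span_lesspoll_ne_UNIV[OF lesspoll_insert_infinite[OF infinite_E
          lesspoll_insert_infinite[OF infinite_E A]]] by blast
    then have z0: "z \<notin> span (insert x0 A)" and z1: "z \<notin> span (insert x A)"
      using span_mono[of "insert x0 A" "insert x (insert x0 A)"]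
        span_mono[of "insert x A" "insert x (insert x0 A)"] by blast+
    then obtain kz where kz: "u z - kz *s z \<in> span A"
      using eigen by (meson span_mono subset_insertI subsetD)
    show ?thesis using pair[OF x0 z0 k0 kz] pair[OF x z1 hx kz] by simp
  qed
  have "u x - k0 *s x \<in> span A" for x
  proof (cases "x \<in> span A")
    case False
    then show ?thesis using eigen same by blast
  next
    case True
    then have "x + x0 \<notin> span A" using span_add_eq x0 by blast
    then have "u (x + x0) - k0 *s (x + x0) \<in> span A" using eigen same by blast
    from span_diff[OF this k0] show ?thesis by (simp add: u.add scale_right_distrib)
  qed
  then show ?thesis by blast
qed

lemma exists_vector_escaping_span:
  "A \<prec> E \<Longrightarrow> \<exists>x. x \<notin> span A \<and> u x \<notin> span (insert x A)"
  using homothety_mod_span_if_no_escape range_not_in_small_span by blast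

end

section \<open>Independence of vectors that are new along a total order\<close>

lemma finite_has_greatest_wrt:
  assumes r: "trans r" "total_on I r" and J: "finite J" "J \<noteq> {}" "J \<subseteq> I"
  shows "\<exists>m\<in>J. \<forall>j\<in>J. j \<noteq> m \<longrightarrow> (j, m) \<in> r"
  using J
proof (induction J rule: finite_induct)
  case (insert x F)
  show ?case
  proof (cases "F = {}")
    case False
    then obtain m where m: "m \<in> F" "\<forall>j\<in>F. j \<noteq> m \<longrightarrow> (j, m) \<in> r"
      using insert by auto
    have "x \<noteq> m" using insert m by auto
    then have "(m, x) \<in> r \<or> (x, m) \<in> r" using r(2) insert.prems m(1) unfolding total_on_def by blast
    then show ?thesis
    proof
      assume "(m, x) \<in> r"
      then have "\<forall>j\<in>insert x F. j \<noteq> x \<longrightarrow> (j, x) \<in> r" using m r(1) by (auto dest: transD)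
      then show ?thesis by blast
    qed (use m in auto)
  qed simp
qed simp

context vspace
begin

lemma independent_image_if_new:
  fixes g :: "'i \<Rightarrow> 'b"
  assumes r: "trans r" "irrefl r" "total_on I r"
    and new: "\<And>s. s \<in> I \<Longrightarrow> g s \<notin> span (g ` {s' \<in> I. (s', s) \<in> r})"
  shows "inj_on g I" and "independent (g ` I)"
proof -
  show "inj_on g I"
  proof (rule inj_onI, rule ccontr)
    fix s s' assume s: "s \<in> I" "s' \<in> I" "g s = g s'" "s \<noteq> s'"
    then have "(s, s') \<in> r \<or> (s', s) \<in> r" using r(3) unfolding total_on_def by blast
    then show False
      using new[OF s(1)] new[OF s(2)] s by (metis (mono_tags, lifting) image_eqI mem_Collect_eq span_base)
  qed
  have finite_case: "independent (g ` J)" if "finite J" "J \<subseteq> I" for J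
    using that
  proof (induction J rule: finite_remove_induct)
    case (remove A)
    obtain m where m: "m \<in> A" "\<forall>j\<in>A. j \<noteq> m \<longrightarrow> (j, m) \<in> r"
      using finite_has_greatest_wrt[OF r(1,3) remove.hyps(1,2) remove.prems] by blast
    have "span (g ` (A - {m})) \<subseteq> span (g ` {s' \<in> I. (s', m) \<in> r})"
      using m remove.prems by (intro span_mono) blast
    then have "g m \<notin> span (g ` (A - {m}))" using new[of m] m(1) remove.prems by blast
    moreover have "g ` A = insert (g m) (g ` (A - {m}))" using m(1) by blast
    moreover have "independent (g ` (A - {m}))" using remove.IH[OF m(1)] remove.prems by blast
    ultimately show ?case by (simp add: independent_insertI)
  qed (simp add: independent_empty)
  show "independent (g ` I)"
  proof
    assume "dependent (g ` I)"
    then obtain t where t: "finite t" "t \<subseteq> g ` I" "dependent t"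
      unfolding dependent_explicit by blast
    then obtain J where "J \<subseteq> I" "finite J" "t = g ` J" using finite_subset_image by metis
    then show False using finite_case t(3) by blast
  qed
qed

end

section \<open>Schedules\<close>

unbundle cardinal_syntax

text \<open>The slot \<open>(c, n)\<close> is the \<open>n\<close>-th step of the chain started by the basis vector \<open>c\<close>.
  The vectors produced at a slot only depend on those produced at its predecessors, and
  since these are fewer than the dimension, a vector escaping their span always exists.\<close>

definition admissible_schedule :: "'b set \<Rightarrow> (('b \<times> nat) \<times> ('b \<times> nat)) set \<Rightarrow> bool" where
  "admissible_schedule E Q \<longleftrightarrow> wf Q \<and> trans Q \<and> total_on (E \<times> UNIV) Q \<and>
     (\<forall>c\<in>E. \<forall>n. ((c, n), (c, Suc n)) \<in> Q) \<and> (\<forall>s. {t. (t, s) \<in> Q} \<prec> E)"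

lemma lesspoll_iff_card_of_ordLess: "A \<prec> B \<longleftrightarrow> |A| <o |B|"
proof -
  have "A \<lesssim> B \<longleftrightarrow> |A| \<le>o |B|" by (simp add: lepoll_def card_of_ordLeq)
  moreover have "A \<approx> B \<longleftrightarrow> |A| =o |B|" by (rule eqpoll_iff_card_of_ordIso)
  ultimately show ?thesis unfolding lesspoll_def
    by (metis ordLeq_iff_ordLess_or_ordIso not_ordLess_ordIso ordLess_imp_ordLeq)
qed

lemma lesspoll_Times_infinite:
  assumes E: "infinite E" and X: "X \<prec> E" and Y: "Y \<prec> E"
  shows "X \<times> Y \<prec> E"
proof (cases "X = {} \<or> Y = {}")
  case True
  then have "finite (X \<times> Y)" by auto
  then show ?thesis by (rule finite_lesspoll_infinite[OF E])
next
  case False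
  have bound: "|A \<times> B| <o |E| \<and> |B \<times> A| <o |E|"
    if "|B| \<le>o |A|" "|A| <o |E|" "B \<noteq> {}" for A :: "'x set" and B :: "'y set"
  proof (cases "finite A")
    case True
    moreover have "finite B" using card_of_ordLeq_finite[OF that(1) True] .
    ultimately have "A \<times> B \<prec> E" "B \<times> A \<prec> E"
      by (simp_all add: finite_lesspoll_infinite[OF E])
    then show ?thesis by (simp add: lesspoll_iff_card_of_ordLess)
  next
    case False
    then have "|A \<times> B| =o |A|" "|B \<times> A| =o |A|"
      using card_of_Times_infinite[OF False that(3,1)] by auto
    then show ?thesis by (intro conjI ordIso_ordLess_trans[OF _ that(2)])
  qed
  have X': "|X| <o |E|" and Y': "|Y| <o |E|" using X Y by (simp_all add: lesspoll_iff_card_of_ordLess)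
  have "X \<noteq> {}" "Y \<noteq> {}" using False by auto
  consider "|Y| \<le>o |X|" | "|X| \<le>o |Y|"
    using ordLeq_total[OF card_of_Well_order[of Y] card_of_Well_order[of X]] by blast
  then have "|X \<times> Y| <o |E|"
  proof cases
    case 1
    from bound[OF 1 X' \<open>Y \<noteq> {}\<close>] show ?thesis by (rule conjunct1)
  next
    case 2
    from bound[OF 2 Y' \<open>X \<noteq> {}\<close>] show ?thesis by (rule conjunct2)
  qed
  then show ?thesis by (simp add: lesspoll_iff_card_of_ordLess)
qed

lemma admissible_schedule_inv_image:
  fixes key :: "'b \<times> nat \<Rightarrow> 'k"
  assumes L: "wf L" "trans L" and key: "inj_on key (E \<times> UNIV)" "total_on (key ` (E \<times> UNIV)) L"
    and step: "\<And>c n. c \<in> E \<Longrightarrow> (key (c, n), key (c, Suc n)) \<in> L"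
    and small: "\<And>s. {t \<in> E \<times> UNIV. (key t, key s) \<in> L} \<prec> E"
  shows "admissible_schedule E {(s, t). s \<in> E \<times> UNIV \<and> t \<in> E \<times> UNIV \<and> (key s, key t) \<in> L}"
    (is "admissible_schedule E ?Q")
  unfolding admissible_schedule_def
proof (intro conjI allI ballI)
  have "?Q \<subseteq> inv_image L key" by auto
  then show "wf ?Q" by (rule wf_subset[OF wf_inv_image[OF L(1)]])
  show "trans ?Q"
  proof (rule transI)
    fix s t r assume "(s, t) \<in> ?Q" "(t, r) \<in> ?Q"
    then show "(s, r) \<in> ?Q" using transD[OF L(2), of "key s" "key t" "key r"] by simp
  qed
  show "total_on (E \<times> UNIV) ?Q"
  proof (rule total_onI)
    fix s t :: "'b \<times> nat" assume st: "s \<in> E \<times> UNIV" "t \<in> E \<times> UNIV" "s \<noteq> t"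
    then have "key s \<noteq> key t" using key(1) unfolding inj_on_def by blast
    then have "(key s, key t) \<in> L \<or> (key t, key s) \<in> L"
      using key(2) st(1,2) unfolding total_on_def by blast
    then show "(s, t) \<in> ?Q \<or> (t, s) \<in> ?Q" using st(1,2) by simp
  qed
  show "((c, n), (c, Suc n)) \<in> ?Q" if "c \<in> E" for c n using step[OF that] that by simp
  have "{t. (t, s) \<in> ?Q} \<subseteq> {t \<in> E \<times> UNIV. (key t, key s) \<in> L}" for s by auto
  then show "{t. (t, s) \<in> ?Q} \<prec> E" for s by (rule lesspoll_trans1[OF subset_imp_lepoll small])
qed

text \<open>In the countable case the slots are ordered diagonally, so that each has finitely many
  predecessors.\<close>

lemma admissible_schedule_countable:
  fixes E :: "'b set"
  assumes E: "infinite E" "countable E"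
  shows "\<exists>Q. admissible_schedule E Q"
proof -
  obtain f :: "'b \<Rightarrow> nat" where "bij_betw f E UNIV" by (rule countableE_infinite[OF E(2,1)])
  then have f: "inj_on f E" by (rule bij_betw_imp_inj_on)
  define key where "key s = (f (fst s) + snd s, f (fst s))" for s :: "'b \<times> nat"
  let ?L = "less_than <*lex*> less_than"
  have inj: "inj_on key (E \<times> UNIV)" using f by (auto simp: inj_on_def key_def)
  have total: "total_on (key ` (E \<times> UNIV)) ?L"
    by (rule total_on_subset[OF total_on_lex_prod[OF total_on_less_than total_on_less_than]]) auto
  have step: "(key (c, n), key (c, Suc n)) \<in> ?L" for c n by (simp add: key_def)
  have small: "{t \<in> E \<times> UNIV. (key t, key s) \<in> ?L} \<prec> E" for s
  proof -
    let ?K = "fst (key s)"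
    have "{t \<in> E \<times> UNIV. (key t, key s) \<in> ?L} \<subseteq> (f -` {..?K} \<inter> E) \<times> {..?K}"
      by (auto simp: key_def)
    moreover have "finite ((f -` {..?K} \<inter> E) \<times> {..?K})"
      using finite_vimage_IntI[OF finite_atMost f] by auto
    ultimately show ?thesis using E(1) by (meson finite_lesspoll_infinite finite_subset)
  qed
  have "admissible_schedule E {(s, t). s \<in> E \<times> UNIV \<and> t \<in> E \<times> UNIV \<and> (key s, key t) \<in> ?L}"
    by (rule admissible_schedule_inv_image[OF wf_lex_prod[OF wf_less_than wf_less_than]
          trans_lex_prod[OF trans_less_than trans_less_than] inj total step small])
  then show ?thesis by blast
qed

text \<open>In the uncountable case the slots are ordered lexicographically, using a well-order of
  \<open>E\<close> of the least possible type; the predecessors of a slot then form an initial segment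
  of size less than \<open>|E|\<close>, times \<open>\<nat>\<close>.\<close>

lemma admissible_schedule_uncountable:
  assumes E: "uncountable E"
  shows "\<exists>Q. admissible_schedule E Q"
proof -
  have infinite: "infinite E" using E countable_finite by blast
  have wo: "well_order_on E |E|" using card_of_Well_order[of E] by (simp add: Field_card_of)
  then have order: "wf ( |E| - Id)" "trans ( |E| - Id)" "total_on E ( |E| - Id)"
    unfolding well_order_on_def linear_order_on_def partial_order_on_def preorder_on_def
    by (auto intro: trans_diff_Id)
  let ?L = "( |E| - Id) <*lex*> less_than"
  have segment: "insert c (underS |E| c) \<prec> E" for c
  proof (cases "c \<in> E")
    case True
    have "|underS |E| c| <o |E|"
      by (rule card_of_underS[OF card_of_Card_order]) (simp add: Field_card_of True)
    then have "underS |E| c \<prec> E" by (simp add: lesspoll_iff_card_of_ordLess)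
    then show ?thesis by (rule lesspoll_insert_infinite[OF infinite])
  next
    case False
    then have "underS |E| c = {}" using FieldI2[of _ c "|E|"] by (auto simp: underS_def Field_card_of)
    then show ?thesis using infinite by (simp add: finite_lesspoll_infinite)
  qed
  have nat: "(UNIV :: nat set) \<prec> E"
  proof -
    have "\<not> E \<approx> (UNIV :: nat set)" using E countable_eqpoll[of "UNIV :: nat set" E] by auto
    then show ?thesis using infinite infinite_le_lepoll eqpoll_sym unfolding lesspoll_def by blast
  qed
  have "{t \<in> E \<times> UNIV. (t, s) \<in> ?L} \<prec> E" for s
  proof -
    have "{t \<in> E \<times> UNIV. (t, s) \<in> ?L} \<subseteq> insert (fst s) (underS |E| (fst s)) \<times> UNIV"
      by (cases s) (auto simp: underS_def)
    then show ?thesis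
      by (rule lesspoll_trans1[OF subset_imp_lepoll lesspoll_Times_infinite[OF infinite segment nat]])
  qed
  then have "admissible_schedule E {(s, t). s \<in> E \<times> UNIV \<and> t \<in> E \<times> UNIV \<and> (id s, id t) \<in> ?L}"
    using order by (intro admissible_schedule_inv_image) auto
  then show ?thesis by blast
qed

lemma exists_admissible_schedule: "infinite E \<Longrightarrow> \<exists>Q. admissible_schedule E Q"
  using admissible_schedule_countable admissible_schedule_uncountable by blast

section \<open>The construction\<close>

locale chain_construction = no_dominant_eigenvalue scale u E
  for scale :: "'a::field \<Rightarrow> 'b::ab_group_add \<Rightarrow> 'b" (infixr \<open>*s\<close> 75) and u E +
  fixes a :: 'a and Q :: "(('b \<times> nat) \<times> ('b \<times> nat)) set"
  assumes schedule: "admissible_schedule E Q"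
begin

lemma wf_Q: "wf Q" and trans_Q: "trans Q" and total_Q: "total_on (E \<times> UNIV) Q"
  and Q_Suc: "c \<in> E \<Longrightarrow> ((c, n), (c, Suc n)) \<in> Q"
  using schedule unfolding admissible_schedule_def by auto

lemma predecessors_lesspoll: "{t. (t, s) \<in> Q} \<prec> E"
  using schedule unfolding admissible_schedule_def by (cases s) blast

definition earlier :: "('b \<times> nat \<Rightarrow> 'b list) \<Rightarrow> 'b \<times> nat \<Rightarrow> 'b set" where
  "earlier g s = (\<Union>t\<in>{t. (t, s) \<in> Q}. set (g t))"

definition pick :: "'b set \<Rightarrow> 'b" where
  "pick T = (SOME x. x \<notin> span T \<and> u x \<notin> span (insert x T))"

definition extend :: "'b \<Rightarrow> 'b set \<Rightarrow> 'b list" where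
  "extend g T = (if u g - a *s g \<notin> span T then [u g - a *s g] else [pick T, u (pick T)])"

definition step :: "('b \<times> nat \<Rightarrow> 'b list) \<Rightarrow> 'b \<times> nat \<Rightarrow> 'b list" where
  "step g s = (if fst s \<notin> E then [] else
     if snd s = 0 then (if fst s \<in> span (earlier g s) then [] else [fst s])
     else if g (fst s, snd s - 1) = [] then []
     else extend (last (g (fst s, snd s - 1))) (earlier g s))"

definition produced :: "'b \<times> nat \<Rightarrow> 'b list" where "produced = wfrec Q step"

abbreviation prior :: "'b \<times> nat \<Rightarrow> 'b set" where "prior \<equiv> earlier produced"

lemma produced_eq: "produced s = step produced s"
proof -
  have earlier_cut: "earlier (cut produced Q s) s = prior s"
    unfolding earlier_def by (auto simp: cut_apply)
  have "produced s = step (cut produced Q s) s" unfolding produced_def by (rule wfrec[OF wf_Q])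
  also have "\<dots> = step produced s"
  proof (cases "fst s \<in> E \<and> snd s \<noteq> 0")
    case True
    then have "((fst s, snd s - 1), s) \<in> Q" using Q_Suc[of "fst s" "snd s - 1"] by (cases s) auto
    then show ?thesis unfolding step_def earlier_cut by (simp add: cut_apply)
  qed (auto simp: step_def earlier_cut)
  finally show ?thesis .
qed

lemma produced_0: "c \<in> E \<Longrightarrow> produced (c, 0) = (if c \<in> span (prior (c, 0)) then [] else [c])"
  by (subst produced_eq) (simp add: step_def)

lemma produced_Suc: "c \<in> E \<Longrightarrow> produced (c, Suc m) =
    (if produced (c, m) = [] then [] else extend (last (produced (c, m))) (prior (c, Suc m)))"
  by (subst produced_eq) (simp add: step_def)

lemma produced_not_in_E: "c \<notin> E \<Longrightarrow> produced (c, m) = []"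
  by (subst produced_eq) (simp add: step_def)

lemma produced_shape: "produced s = [] \<or> (\<exists>y. produced s = [y]) \<or> (\<exists>x. produced s = [x, u x])"
proof -
  obtain c m where s: "s = (c, m)" by (cases s)
  show ?thesis
  proof (cases "c \<in> E")
    case True
    then show ?thesis using s produced_0 produced_Suc[of c] by (cases m) (auto simp: extend_def)
  qed (use s produced_not_in_E in simp)
qed

lemma length_produced_le: "length (produced s) \<le> 2"
  using produced_shape[of s] by auto

lemma prior_lesspoll: "prior s \<prec> E"
proof -
  have "prior s \<subseteq> (\<lambda>(t, b). produced t ! (if b then 1 else 0)) ` ({t. (t, s) \<in> Q} \<times> UNIV)"
  proof
    fix y assume "y \<in> prior s"
    then obtain t i where "(t, s) \<in> Q" "i < length (produced t)" "y = produced t ! i"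
      unfolding earlier_def by (auto simp: in_set_conv_nth)
    moreover then have "i = 0 \<or> i = 1" using length_produced_le[of t] by auto
    ultimately show "y \<in> (\<lambda>(t, b). produced t ! (if b then 1 else 0)) ` ({t. (t, s) \<in> Q} \<times> UNIV)"
      by (auto intro!: image_eqI[of _ _ "(t, i = 1)"])
  qed
  then have "prior s \<lesssim> {t. (t, s) \<in> Q} \<times> (UNIV :: bool set)" by (rule subset_image_lepoll)
  also have "\<dots> \<prec> E"
    by (intro lesspoll_Times_infinite infinite_E predecessors_lesspoll finite_lesspoll_infinite) simp
  finally show ?thesis .
qed

lemma pick: "T \<prec> E \<Longrightarrow> pick T \<notin> span T \<and> u (pick T) \<notin> span (insert (pick T) T)"
  unfolding pick_def by (rule someI_ex[OF exists_vector_escaping_span])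

lemma extend_ne_Nil: "extend g T \<noteq> []"
  by (simp add: extend_def)

lemma hd_extend: "T \<prec> E \<Longrightarrow> hd (extend g T) \<notin> span T"
  using pick by (simp add: extend_def)

lemma extend_length_1: "length (extend g T) = 1 \<Longrightarrow> extend g T = [u g - a *s g]"
  by (simp add: extend_def split: if_splits)

lemma extend_length_2: "length (extend g T) = 2 \<Longrightarrow>
    extend g T = [pick T, u (pick T)] \<and> u g - a *s g \<in> span T"
  by (simp add: extend_def split: if_splits)

lemma produced_cases:
  assumes "produced s \<noteq> []"
  shows "fst s \<in> E \<and> ((snd s = 0 \<and> produced s = [fst s] \<and> fst s \<notin> span (prior s)) \<or>
    (\<exists>k. snd s = Suc k \<and> produced (fst s, k) \<noteq> [] \<and>
      produced s = extend (last (produced (fst s, k))) (prior s)))"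
proof -
  obtain c m where s: "s = (c, m)" by (cases s)
  have "c \<in> E" using assms s produced_not_in_E by blast
  then show ?thesis
    using assms s produced_0[of c] produced_Suc[of c] by (cases m) (auto split: if_splits)
qed

definition positions :: "(('b \<times> nat) \<times> nat) set" where
  "positions = {(s, i). i < length (produced s)}"

definition vec :: "('b \<times> nat) \<times> nat \<Rightarrow> 'b" where "vec \<sigma> = produced (fst \<sigma>) ! snd \<sigma>"

definition picked :: "('b \<times> nat) \<times> nat \<Rightarrow> bool" where
  "picked \<sigma> \<longleftrightarrow> snd \<sigma> = 0 \<and> length (produced (fst \<sigma>)) = 2"

definition pos_less :: "((('b \<times> nat) \<times> nat) \<times> (('b \<times> nat) \<times> nat)) set" where
  "pos_less = Q <*lex*> less_than"

definition next_slot :: "'b \<times> nat \<Rightarrow> 'b \<times> nat" where "next_slot s = (fst s, Suc (snd s))"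

definition next_pos :: "('b \<times> nat) \<times> nat \<Rightarrow> ('b \<times> nat) \<times> nat" where
  "next_pos \<sigma> = (if picked \<sigma> then (fst \<sigma>, 1) else (next_slot (fst \<sigma>), 0))"

lemma produced_length_2: "length (produced s) = 2 \<Longrightarrow> produced s = [vec (s, 0), u (vec (s, 0))]"
  using produced_shape[of s] by (auto simp: vec_def)

lemma position_index:
  "\<sigma> \<in> positions \<Longrightarrow> snd \<sigma> = 0 \<or> (snd \<sigma> = 1 \<and> length (produced (fst \<sigma>)) = 2)"
  using produced_shape[of "fst \<sigma>"] by (cases \<sigma>) (auto simp: positions_def less_Suc_eq)

lemma vec_not_picked: "\<sigma> \<in> positions \<Longrightarrow> \<not> picked \<sigma> \<Longrightarrow>
    snd \<sigma> = length (produced (fst \<sigma>)) - 1 \<and> vec \<sigma> = last (produced (fst \<sigma>))"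
  using produced_shape[of "fst \<sigma>"]
  by (cases \<sigma>) (auto simp: positions_def picked_def vec_def less_Suc_eq)

lemma produced_ne_Nil: "\<sigma> \<in> positions \<Longrightarrow> produced (fst \<sigma>) \<noteq> []"
  by (cases \<sigma>) (auto simp: positions_def)

lemma position_in_E: "\<sigma> \<in> positions \<Longrightarrow> fst (fst \<sigma>) \<in> E"
  using produced_cases[OF produced_ne_Nil] by blast

lemma wf_pos_less: "wf pos_less"
  unfolding pos_less_def by (intro wf_lex_prod wf_Q wf_less_than)

lemma trans_pos_less: "trans pos_less"
  unfolding pos_less_def by (intro trans_lex_prod trans_Q trans_less_than)

lemma irrefl_pos_less: "irrefl pos_less"
  using wf_pos_less by (auto simp: irrefl_def dest: wf_not_refl)

lemma total_pos_less: "total_on positions pos_less"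
proof (rule total_onI)
  fix \<sigma> \<sigma>' assume \<sigma>: "\<sigma> \<in> positions" "\<sigma>' \<in> positions" "\<sigma> \<noteq> \<sigma>'"
  obtain s i s' i' where eq: "\<sigma> = (s, i)" "\<sigma>' = (s', i')" by (cases \<sigma>, cases \<sigma>')
  show "(\<sigma>, \<sigma>') \<in> pos_less \<or> (\<sigma>', \<sigma>) \<in> pos_less"
  proof (cases "s = s'")
    case False
    have "s \<in> E \<times> UNIV" "s' \<in> E \<times> UNIV"
      using position_in_E[OF \<sigma>(1)] position_in_E[OF \<sigma>(2)] eq by (auto simp: mem_Times_iff)
    then have "(s, s') \<in> Q \<or> (s', s) \<in> Q" using total_Q False unfolding total_on_def by blast
    then show ?thesis using eq by (auto simp: pos_less_def)
  qed (use \<sigma>(3) eq in \<open>auto simp: pos_less_def\<close>)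
qed

lemma vec_earlier_slots: "vec ` {\<sigma> \<in> positions. (fst \<sigma>, s) \<in> Q} = prior s"
proof
  show "prior s \<subseteq> vec ` {\<sigma> \<in> positions. (fst \<sigma>, s) \<in> Q}"
  proof
    fix y assume "y \<in> prior s"
    then obtain t i where "(t, s) \<in> Q" "i < length (produced t)" "y = produced t ! i"
      unfolding earlier_def by (auto simp: in_set_conv_nth)
    then show "y \<in> vec ` {\<sigma> \<in> positions. (fst \<sigma>, s) \<in> Q}"
      by (auto simp: positions_def vec_def intro!: image_eqI[of _ _ "(t, i)"])
  qed
qed (auto simp: earlier_def positions_def vec_def)

lemma earlier_than_index_0:
  "{\<sigma>' \<in> positions. (\<sigma>', (s, 0)) \<in> pos_less} = {\<sigma>' \<in> positions. (fst \<sigma>', s) \<in> Q}"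
  by (auto simp: pos_less_def)

lemma earlier_than_index_1: "(s, 0) \<in> positions \<Longrightarrow>
    {\<sigma>' \<in> positions. (\<sigma>', (s, 1)) \<in> pos_less} = insert (s, 0) {\<sigma>' \<in> positions. (fst \<sigma>', s) \<in> Q}"
  by (auto simp: pos_less_def)

lemma hd_produced_new:
  assumes "produced s \<noteq> []"
  shows "vec (s, 0) \<notin> span (prior s)"
  using produced_cases[OF assms]
proof (elim conjE disjE exE)
  fix k assume "produced s = extend (last (produced (fst s, k))) (prior s)"
  then have "vec (s, 0) = hd (extend (last (produced (fst s, k))) (prior s))"
    by (simp add: vec_def hd_conv_nth extend_ne_Nil)
  then show ?thesis using hd_extend[OF prior_lesspoll] by simp
qed (simp add: vec_def)

lemma second_produced_new:
  assumes "length (produced s) = 2"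
  shows "vec (s, 1) \<notin> span (insert (vec (s, 0)) (prior s))"
proof -
  have "produced s \<noteq> []" using assms by auto
  then obtain g where g: "produced s = extend g (prior s)"
    using produced_cases assms by fastforce
  then have "produced s = [pick (prior s), u (pick (prior s))]"
    using assms extend_length_2 by simp
  then show ?thesis using pick[OF prior_lesspoll] by (simp add: vec_def)
qed

lemma vec_new: "\<sigma> \<in> positions \<Longrightarrow> vec \<sigma> \<notin> span (vec ` {\<sigma>' \<in> positions. (\<sigma>', \<sigma>) \<in> pos_less})"
proof (cases \<sigma>)
  case (Pair s i)
  assume \<sigma>: "\<sigma> \<in> positions"
  then consider "i = 0" | "i = 1" "length (produced s) = 2" using position_index[OF \<sigma>] Pair by force
  then show ?thesis
  proof cases
    case 1
    then show ?thesis
      using hd_produced_new produced_ne_Nil[OF \<sigma>] Pair earlier_than_index_0 vec_earlier_slots by simp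
  next
    case 2
    then have "(s, 0) \<in> positions" by (simp add: positions_def)
    then show ?thesis
      using second_produced_new 2 Pair earlier_than_index_1 vec_earlier_slots by simp
  qed
qed

lemma inj_on_vec: "inj_on vec positions"
  and independent_vec: "independent (vec ` positions)"
  using independent_image_if_new[OF trans_pos_less irrefl_pos_less total_pos_less vec_new] by auto

lemma span_vec: "span (vec ` positions) = UNIV"
proof -
  have "E \<subseteq> span (vec ` positions)"
  proof
    fix c assume c: "c \<in> E"
    show "c \<in> span (vec ` positions)"
    proof (cases "c \<in> span (prior (c, 0))")
      case True
      have "prior (c, 0) \<subseteq> vec ` positions" using vec_earlier_slots[of "(c, 0)"] by auto
      then show ?thesis using True span_mono by blast
    next
      case False
      then have "((c, 0), 0) \<in> positions" "vec ((c, 0), 0) = c"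
        using produced_0[OF c] by (auto simp: positions_def vec_def)
      then show ?thesis by (metis image_eqI span_base)
    qed
  qed
  then show ?thesis using span_E span_minimal[OF _ subspace_span] by blast
qed

definition v_pos :: "('b \<times> nat) \<times> nat \<Rightarrow> 'b" where
  "v_pos \<sigma> = (if picked \<sigma> then 0
     else a *s vec \<sigma> - (if picked (next_pos \<sigma>) then vec (next_pos \<sigma>) else 0))"

lemma next_pos_picked:
  assumes \<sigma>: "\<sigma> \<in> positions" and "picked \<sigma>"
  shows "next_pos \<sigma> \<in> positions" "snd (fst (next_pos \<sigma>)) \<noteq> 0" "(\<sigma>, next_pos \<sigma>) \<in> pos_less"
    and "u (vec \<sigma>) - v_pos \<sigma> = vec (next_pos \<sigma>)"
proof -
  obtain s where s: "\<sigma> = (s, 0)" "length (produced s) = 2"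
    using assms by (cases \<sigma>) (auto simp: picked_def)
  then have "produced s \<noteq> []" by auto
  then have "snd s \<noteq> 0" using produced_cases s(2) by fastforce
  with s assms show "next_pos \<sigma> \<in> positions" "snd (fst (next_pos \<sigma>)) \<noteq> 0"
      "(\<sigma>, next_pos \<sigma>) \<in> pos_less"
    by (auto simp: next_pos_def positions_def pos_less_def)
  have "vec (s, 1) = produced s ! 1" by (simp add: vec_def)
  also have "\<dots> = u (vec (s, 0))" by (subst produced_length_2[OF s(2)]) simp
  finally have "vec (s, 1) = u (vec (s, 0))" .
  with s assms show "u (vec \<sigma>) - v_pos \<sigma> = vec (next_pos \<sigma>)"
    by (simp add: next_pos_def v_pos_def)
qed

lemma next_pos_not_picked:
  assumes \<sigma>: "\<sigma> \<in> positions" and not_picked: "\<not> picked \<sigma>"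
  shows "next_pos \<sigma> \<in> positions" "snd (fst (next_pos \<sigma>)) \<noteq> 0" "(\<sigma>, next_pos \<sigma>) \<in> pos_less"
    and "u (vec \<sigma>) - v_pos \<sigma> - vec (next_pos \<sigma>) \<in> span (prior (fst (next_pos \<sigma>)))"
proof -
  obtain c m i where \<sigma>_eq: "\<sigma> = ((c, m), i)" by (metis prod.collapse)
  let ?s = "(c, Suc m)" and ?g = "vec \<sigma>"
  have c: "c \<in> E" using position_in_E[OF \<sigma>] \<sigma>_eq by simp
  have next_eq: "next_pos \<sigma> = (?s, 0)"
    using not_picked \<sigma>_eq by (simp add: next_pos_def next_slot_def)
  have g: "?g = last (produced (c, m))" using vec_not_picked[OF \<sigma> not_picked] \<sigma>_eq by (metis fst_conv)
  have "produced (c, m) \<noteq> []" using produced_ne_Nil[OF \<sigma>] \<sigma>_eq by simp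
  then have produced_s: "produced ?s = extend ?g (prior ?s)"
    using produced_Suc[OF c, of m] g by simp
  then show "next_pos \<sigma> \<in> positions" "snd (fst (next_pos \<sigma>)) \<noteq> 0"
    using next_eq extend_ne_Nil[of ?g] by (auto simp: positions_def)
  show "(\<sigma>, next_pos \<sigma>) \<in> pos_less" using next_eq \<sigma>_eq Q_Suc[OF c] by (simp add: pos_less_def)
  have "length (produced ?s) = 1 \<or> length (produced ?s) = 2"
    using length_produced_le[of ?s] extend_ne_Nil[of ?g "prior ?s"] unfolding produced_s
    by (cases "extend ?g (prior ?s)") (auto simp: le_Suc_eq)
  then show "u ?g - v_pos \<sigma> - vec (next_pos \<sigma>) \<in> span (prior (fst (next_pos \<sigma>)))"
  proof
    assume "length (produced ?s) = 1"
    then have "produced ?s = [u ?g - a *s ?g]"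
      using extend_length_1[of ?g "prior ?s"] produced_s by simp
    then have "vec (?s, 0) = u ?g - a *s ?g"
      by (simp add: vec_def[of "(?s, 0)"])
    then show ?thesis using not_picked \<open>length (produced ?s) = 1\<close> next_eq
      by (simp add: v_pos_def picked_def[of "(?s, 0)"] span_zero)
  next
    assume "length (produced ?s) = 2"
    then have "u ?g - a *s ?g \<in> span (prior ?s)" using extend_length_2 produced_s by simp
    then show ?thesis using not_picked \<open>length (produced ?s) = 2\<close> next_eq
      by (simp add: v_pos_def picked_def[of "(?s, 0)"])
  qed
qed

lemma next_pos_in: "\<sigma> \<in> positions \<Longrightarrow> next_pos \<sigma> \<in> positions"
  by (cases "picked \<sigma>") (simp_all add: next_pos_picked(1) next_pos_not_picked(1))

lemma next_pos_not_start: "\<sigma> \<in> positions \<Longrightarrow> snd (fst (next_pos \<sigma>)) \<noteq> 0"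
  by (cases "picked \<sigma>") (simp_all add: next_pos_picked(2) next_pos_not_picked(2))

lemma next_pos_less: "\<sigma> \<in> positions \<Longrightarrow> (\<sigma>, next_pos \<sigma>) \<in> pos_less"
  by (cases "picked \<sigma>") (simp_all add: next_pos_picked(3) next_pos_not_picked(3))

lemma u_minus_v_pos:
  assumes \<sigma>: "\<sigma> \<in> positions"
  shows "u (vec \<sigma>) - v_pos \<sigma> - vec (next_pos \<sigma>)
    \<in> span (vec ` {\<sigma>' \<in> positions. (\<sigma>', next_pos \<sigma>) \<in> pos_less})"
proof (cases "picked \<sigma>")
  case True
  then have "u (vec \<sigma>) - v_pos \<sigma> = vec (next_pos \<sigma>)" by (rule next_pos_picked(4)[OF \<sigma>])
  then show ?thesis by (simp add: span_zero)
next
  case False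
  define s' where "s' = next_slot (fst \<sigma>)"
  have "next_pos \<sigma> = (s', 0)" using False by (simp add: next_pos_def s'_def)
  moreover have "vec ` {\<sigma>' \<in> positions. (\<sigma>', (s', 0)) \<in> pos_less} = prior s'"
    unfolding earlier_than_index_0 by (rule vec_earlier_slots)
  ultimately show ?thesis using next_pos_not_picked(4)[OF \<sigma> False] by simp
qed

lemma inj_on_next_pos: "inj_on next_pos positions"
proof (rule inj_onI)
  fix \<sigma> \<tau> assume \<sigma>: "\<sigma> \<in> positions" and \<tau>: "\<tau> \<in> positions" and eq: "next_pos \<sigma> = next_pos \<tau>"
  have "picked \<sigma> = picked \<tau>" using eq by (auto simp: next_pos_def split: if_splits)
  then consider "picked \<sigma>" "picked \<tau>" | "\<not> picked \<sigma>" "\<not> picked \<tau>" by blast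
  then show "\<sigma> = \<tau>"
  proof cases
    case 1
    then have "fst \<sigma> = fst \<tau>" "snd \<sigma> = snd \<tau>" using eq by (simp_all add: next_pos_def picked_def)
    then show ?thesis by (simp add: prod_eq_iff)
  next
    case 2
    then have fst_eq: "fst \<sigma> = fst \<tau>" using eq by (simp add: next_pos_def next_slot_def prod_eq_iff)
    then have "snd \<sigma> = snd \<tau>" using vec_not_picked[OF \<sigma> 2(1)] vec_not_picked[OF \<tau> 2(2)] by simp
    with fst_eq show ?thesis by (simp add: prod_eq_iff)
  qed
qed

lemma next_pos_onto:
  assumes \<tau>: "\<tau> \<in> positions" "snd (fst \<tau>) \<noteq> 0"
  shows "\<tau> \<in> next_pos ` positions"
proof -
  obtain s j where \<tau>_eq: "\<tau> = (s, j)" by (cases \<tau>)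
  consider "j = 0" | "j = 1" "length (produced s) = 2" using position_index[OF \<tau>(1)] \<tau>_eq by force
  then show ?thesis
  proof cases
    case 1
    obtain c k where s: "s = (c, Suc k)" "produced (c, k) \<noteq> []"
      using produced_cases[OF produced_ne_Nil[OF \<tau>(1)]] \<tau> \<tau>_eq by (cases s) auto
    let ?\<sigma> = "((c, k), length (produced (c, k)) - 1)"
    have "?\<sigma> \<in> positions" using s(2) by (simp add: positions_def)
    moreover have "\<not> picked ?\<sigma>"
      using s(2) length_produced_le[of "(c, k)"] by (auto simp: picked_def)
    ultimately show ?thesis using 1 s \<tau>_eq by (force simp: next_pos_def next_slot_def)
  next
    case 2
    then have "(s, 0) \<in> positions" "picked (s, 0)" by (auto simp: positions_def picked_def)
    then show ?thesis using 2 \<tau>_eq by (force simp: next_pos_def)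
  qed
qed

lemma bij_betw_next_pos: "bij_betw next_pos positions {\<tau> \<in> positions. snd (fst \<tau>) \<noteq> 0}"
  unfolding bij_betw_def using inj_on_next_pos next_pos_in next_pos_not_start next_pos_onto by auto

sublocale self_pair: vector_space_pair scale scale
  by (simp add: vector_space_pair_def vector_space_axioms)

definition slot :: "'b \<Rightarrow> ('b \<times> nat) \<times> nat" where "slot = inv_into positions vec"

definition v :: "'b \<Rightarrow> 'b" where
  "v = self_pair.construct (vec ` positions) (\<lambda>d. v_pos (slot d))"

lemma slot_vec: "\<sigma> \<in> positions \<Longrightarrow> slot (vec \<sigma>) = \<sigma>"
  unfolding slot_def by (rule inv_into_f_f[OF inj_on_vec])

lemma linear_v: "Vector_Spaces.linear scale scale v"
  unfolding v_def by (rule self_pair.linear_construct[OF independent_vec])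

lemma v_vec: "\<sigma> \<in> positions \<Longrightarrow> v (vec \<sigma>) = v_pos \<sigma>"
  unfolding v_def using self_pair.construct_basis[OF independent_vec] slot_vec by simp

lemma v_v: "v (v x) = a *s v x"
proof -
  interpret v: Vector_Spaces.linear scale scale v by (rule linear_v)
  have basis: "v (v (vec \<sigma>)) = a *s v (vec \<sigma>)" if \<sigma>: "\<sigma> \<in> positions" for \<sigma>
  proof (cases "picked \<sigma>")
    case True
    then show ?thesis using v_vec[OF \<sigma>] by (simp add: v_pos_def v.zero)
  next
    case False
    define \<xi> where "\<xi> = (if picked (next_pos \<sigma>) then vec (next_pos \<sigma>) else 0)"
    have "v \<xi> = 0" using v_vec[OF next_pos_in[OF \<sigma>]] by (simp add: \<xi>_def v_pos_def v.zero)
    moreover have "v (vec \<sigma>) = a *s vec \<sigma> - \<xi>" using v_vec[OF \<sigma>] False by (simp add: v_pos_def \<xi>_def)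
    ultimately show ?thesis by (simp add: v.diff v.scale)
  qed
  have "Vector_Spaces.linear scale scale (v \<circ> v)"
    by (rule Vector_Spaces.linear_compose[OF linear_v linear_v])
  moreover have "Vector_Spaces.linear scale scale (\<lambda>x. a *s v x)"
    by (rule self_pair.linear_compose_scale_right[OF linear_v])
  ultimately have "(v \<circ> v) x = a *s v x"
    by (rule self_pair.linear_eq_on[where B = "vec ` positions"]) (auto simp: span_vec basis)
  then show ?thesis by simp
qed

lemma elementary_u_minus_v: "elementary scale (\<lambda>x. u x - v x)"
proof -
  let ?D = "vec ` positions" and ?B = "vec ` {\<sigma> \<in> positions. snd (fst \<sigma>) = 0}"
  let ?succ = "\<lambda>d. vec (next_pos (slot d))"
  have "bij_betw ?succ ?D (?D - ?B)"
  proof -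
    have "bij_betw slot ?D positions"
      unfolding slot_def by (rule bij_betw_inv_into) (simp add: bij_betw_def inj_on_vec)
    moreover have "bij_betw vec {\<tau> \<in> positions. snd (fst \<tau>) \<noteq> 0} (?D - ?B)"
    proof -
      have "{\<tau> \<in> positions. snd (fst \<tau>) \<noteq> 0} = positions - {\<sigma> \<in> positions. snd (fst \<sigma>) = 0}"
        by auto
      then show ?thesis
        using inj_on_image_set_diff[OF inj_on_vec] inj_on_subset[OF inj_on_vec]
        by (simp add: bij_betw_def)
    qed
    ultimately have "bij_betw (vec \<circ> next_pos \<circ> slot) ?D (?D - ?B)"
      using bij_betw_next_pos by (blast intro: bij_betw_trans)
    then show ?thesis by (simp add: comp_def)
  qed
  moreover have "\<sigma> \<in> positions \<Longrightarrow>
      {d' \<in> ?D. (slot d', slot (?succ (vec \<sigma>))) \<in> pos_less}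
        = vec ` {\<sigma>' \<in> positions. (\<sigma>', next_pos \<sigma>) \<in> pos_less}" for \<sigma>
    by (auto simp: slot_vec next_pos_in)
  moreover have "Vector_Spaces.linear scale scale (\<lambda>x. u x - v x)"
    by (rule self_pair.linear_compose_sub[OF linear_u linear_v])
  ultimately have "shift_basis_axioms scale (\<lambda>x. u x - v x) ?D ?B (inv_image pos_less slot) ?succ"
    by (intro shift_basis_axioms.intro)
      (auto simp: span_vec independent_vec wf_pos_less slot_vec next_pos_in next_pos_less
        v_vec u_minus_v_pos)
  then interpret shift_basis scale "\<lambda>x. u x - v x" ?D ?B "inv_image pos_less slot" ?succ
    by (intro shift_basis.intro) (simp_all add: vspace_def vector_space_axioms)
  show ?thesis by (rule elementary)
qed

end

theorem theorem9:
  fixes scale :: "'a::field \<Rightarrow> 'v::ab_group_add \<Rightarrow> 'v"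
    and u :: "'v \<Rightarrow> 'v"
  assumes "vector_space scale"
    and "infinite_dimensional scale"
    and "Vector_Spaces.linear scale scale u"
    and "\<forall>c. \<not> dominant_eigenvalue scale u c"
  shows "\<forall>a. \<exists>v. Vector_Spaces.linear scale scale v \<and>
           (\<forall>x. v (v x) = scale a (v x)) \<and>
           elementary scale (\<lambda>x. u x - v x)"
proof
  fix a
  interpret V: vspace scale using assms(1) by (simp add: vspace_def)
  obtain E where E: "V.independent E" "V.span E = UNIV"
    using V.maximal_independent_subset[of UNIV] by (metis V.span_UNIV V.span_eq top.extremum_uniqueI)
  have "infinite E" using assms(2) E(2) unfolding infinite_dimensional_def by blast
  moreover have "\<not> C \<prec> E" if "V.independent C" "V.span C = range (\<lambda>x. u x - scale c x)" for c C
    using assms(4) E that unfolding dominant_eigenvalue_def rank_lt_dim_def by blast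
  ultimately interpret no_dominant_eigenvalue scale u E
    using assms(1,3) E by (intro no_dominant_eigenvalue.intro no_dominant_eigenvalue_axioms.intro)
      (simp_all add: vspace_def)
  obtain Q where "admissible_schedule E Q" using exists_admissible_schedule[OF infinite_E] by blast
  then interpret chain_construction scale u E a Q
    by (intro chain_construction.intro chain_construction_axioms.intro) unfold_locales
  show "\<exists>v. Vector_Spaces.linear scale scale v \<and> (\<forall>x. v (v x) = scale a (v x)) \<and>
      elementary scale (\<lambda>x. u x - v x)"
    using linear_v v_v elementary_u_minus_v by blast
qed

end
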